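(* Fix constants $c > 0$ and $c' > 0$ and consider RLS-GP with $F = \{\mathrm{AND}, \mathrm{OR}\}$, $L = \{x_1, \ldots, x_n\}$, tree size limit $\ell \ge n$, target $h \in \{\mathrm{AND}_n, \mathrm{OR}_n\}$, evaluating solutions in each iteration on a fresh training set of $s \ge n^{c} \lg^2 n$ inputs sampled uniformly at random from $\{0,1\}^n$, and terminating when the sampled error of its current solution is at most $c' \lg n$. Then, with high probability, within any polynomial number of iterations no solution with a generalisation error greater than $n^{-c}$ has a sampled error of at most $c' \lg n$ on the training set of that iteration.
   Context: Programs are finite rooted binary trees (the empty tree is allowed) whose internal nodes are labelled by binary Boolean functions from $F$ and whose leaves are labelled by literals from $L$; a program computes a Boolean function of $(x_1,\dots,x_n)$ in the obvious way. $\mathrm{AND}_n(x) = x_1 \wedge \dots \wedge x_n$, $\mathrm{OR}_n(x) = x_1 \vee \dots \vee x_n$. The generalisation error of $X$ is $|\{x \in \{0,1\}^n : X(x) \ne h(x)\}|/2^n$. In each iteration a fresh training set of $s$ inputs is drawn independently and uniformly at random from $\{0,1\}^n$; the sampled error $f(X)$ of a program $X$ in that iteration is the number of sampled inputs on which $X$ differs from $h$; parent and offspring are evaluated on the same training set. LeafCount$(X)$ is the number of leaves. HVL-Prime with subtree deletion, applied to a tree $X$: choose $op \in \{\mathrm{INS}, \mathrm{DEL}, \mathrm{SUB}\}$, a literal $l \in L$ and a function $g \in F$, independently and uniformly at random. If $X$ is empty, the result is the single leaf $l$. Otherwise: if $op = \mathrm{INS}$, choose a node $x$ of $X$ uniformly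 at random and replace it by a new node labelled $g$ whose two children are the subtree rooted at $x$ and a new leaf $l$, in uniformly random order; if $op = \mathrm{DEL}$, choose a node $x$ of $X$ (leaf or internal) uniformly at random and replace the parent of $x$ by the sibling of $x$; if $op = \mathrm{SUB}$, choose a leaf of $X$ uniformly at random and replace it by $l$. RLS-GP with tree size limit $\ell$: start with the empty tree $X$; in each iteration let $X' := $ HVL-Prime$(X)$, and if LeafCount$(X') \le \ell$ and $f(X') \le f(X)$ then set $X := X'$. $\lg$ is the base-2 logarithm; "with high probability" means with probability tending to $1$ as $n \to \infty$. *)

theory Defs
  imports "HOL-Probability.Probability"
begin

text \<open>Function set F = {AND, OR}; literal set L = {x_1,...,x_n}, where literal x_(i+1)
  is represented by the leaf label i (0 <= i < n). A program is either empty (None)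
  or a nonempty tree (Some t).\<close>

datatype func = AND | OR

datatype tree = Lf nat | Nd func tree tree

type_synonym program = "tree option"

type_synonym input = "bool list"

fun apply_func :: "func \<Rightarrow> bool \<Rightarrow> bool \<Rightarrow> bool" where
  "apply_func AND a b = (a \<and> b)"
| "apply_func OR a b = (a \<or> b)"

fun eval_tree :: "tree \<Rightarrow> input \<Rightarrow> bool" where
  "eval_tree (Lf i) x = x ! i"
| "eval_tree (Nd g l r) x = apply_func g (eval_tree l x) (eval_tree r x)"

text \<open>The empty program computes no Boolean value (None), so it differs from the
  target on every input.\<close>
definition eval_prog :: "program \<Rightarrow> input \<Rightarrow> bool option" where
  "eval_prog X x = map_option (\<lambda>t. eval_tree t x) X"

fun nnodes :: "tree \<Rightarrow> nat" where
  "nnodes (Lf i) = 1"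
| "nnodes (Nd g l r) = 1 + nnodes l + nnodes r"

fun nleaves :: "tree \<Rightarrow> nat" where
  "nleaves (Lf i) = 1"
| "nleaves (Nd g l r) = nleaves l + nleaves r"

definition LeafCount :: "program \<Rightarrow> nat" where
  "LeafCount X = (case X of None \<Rightarrow> 0 | Some t \<Rightarrow> nleaves t)"

definition inputs :: "nat \<Rightarrow> input set" where
  "inputs n = {x. length x = n}"

definition target :: "func \<Rightarrow> nat \<Rightarrow> input \<Rightarrow> bool" where
  "target g n x = (case g of AND \<Rightarrow> (\<forall>i<n. x ! i) | OR \<Rightarrow> (\<exists>i<n. x ! i))"

definition gen_error :: "nat \<Rightarrow> (input \<Rightarrow> bool) \<Rightarrow> program \<Rightarrow> real" where
  "gen_error n h X = real (card {x \<in> inputs n. eval_prog X x \<noteq> Some (h x)}) / 2 ^ n"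

definition sampled_error :: "(input \<Rightarrow> bool) \<Rightarrow> input list \<Rightarrow> program \<Rightarrow> nat" where
  "sampled_error h T X = length (filter (\<lambda>x. eval_prog X x \<noteq> Some (h x)) T)"

text \<open>s inputs drawn independently and uniformly from {0,1}^n: uniform distribution on
  the s-fold product (lists of length s of inputs of length n).\<close>
definition training_set :: "nat \<Rightarrow> nat \<Rightarrow> input list pmf" where
  "training_set n s = pmf_of_set {T. length T = s \<and> (\<forall>x\<in>set T. x \<in> inputs n)}"

text \<open>Nodes are numbered in preorder (0 = root), leaves left to right.\<close>

fun ins_at :: "tree \<Rightarrow> nat \<Rightarrow> (tree \<Rightarrow> tree) \<Rightarrow> tree" where
  "ins_at t 0 f = f t"
| "ins_at (Lf i) (Suc k) f = Lf i"
| "ins_at (Nd g l r) (Suc k) f =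
     (if k < nnodes l then Nd g (ins_at l k f) r else Nd g l (ins_at r (k - nnodes l) f))"

text \<open>Delete the non-root node with preorder index k: its parent is replaced by its sibling.\<close>
fun del_at :: "tree \<Rightarrow> nat \<Rightarrow> tree" where
  "del_at (Lf i) k = Lf i"
| "del_at (Nd g l r) k =
     (if k = 1 then r
      else if k = 1 + nnodes l then l
      else if k - 1 < nnodes l then Nd g (del_at l (k - 1)) r
      else Nd g l (del_at r (k - 1 - nnodes l)))"

text \<open>Choosing the root (which has no parent) deletes the whole tree.\<close>
definition del_prog :: "tree \<Rightarrow> nat \<Rightarrow> program" where
  "del_prog t k = (if k = 0 then None else Some (del_at t k))"

fun sub_at :: "tree \<Rightarrow> nat \<Rightarrow> nat \<Rightarrow> tree" where
  "sub_at (Lf i) k l = Lf l"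
| "sub_at (Nd g a b) k l =
     (if k < nleaves a then Nd g (sub_at a k l) b else Nd g a (sub_at b (k - nleaves a) l))"

datatype mop = INS | DEL | SUB

definition hvl_prime :: "nat \<Rightarrow> program \<Rightarrow> program pmf" where
  "hvl_prime n X =
     do { op \<leftarrow> pmf_of_set {INS, DEL, SUB};
          l \<leftarrow> pmf_of_set {..<n};
          g \<leftarrow> pmf_of_set {AND, OR};
          (case X of
             None \<Rightarrow> return_pmf (Some (Lf l))
           | Some t \<Rightarrow>
              (case op of
                 INS \<Rightarrow> do { k \<leftarrow> pmf_of_set {..<nnodes t};
                             b \<leftarrow> pmf_of_set {True, False};
                             return_pmf (Some (ins_at t k
                               (\<lambda>u. if b then Nd g u (Lf l) else Nd g (Lf l) u))) }
               | DEL \<Rightarrow> do { k \<leftarrow> pmf_of_set {..<nnodes t};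
                             return_pmf (del_prog t k) }
               | SUB \<Rightarrow> do { k \<leftarrow> pmf_of_set {..<nleaves t};
                             return_pmf (Some (sub_at t k l)) })) }"

definition bad_sol :: "real \<Rightarrow> real \<Rightarrow> nat \<Rightarrow> (input \<Rightarrow> bool) \<Rightarrow> input list \<Rightarrow> program \<Rightarrow> bool" where
  "bad_sol c c' n h T X \<longleftrightarrow>
     gen_error n h X > real n powr (- c) \<and> real (sampled_error h T X) \<le> c' * log 2 (real n)"

text \<open>The state is the current solution together with a flag
  recording whether some solution evaluated so far (parent or offspring) was bad on the
  training set of its iteration.\<close>
definition rls_step :: "real \<Rightarrow> real \<Rightarrow> nat \<Rightarrow> nat \<Rightarrow> nat \<Rightarrow> (input \<Rightarrow> bool)
    \<Rightarrow> program \<times> bool \<Rightarrow> (program \<times> bool) pmf" where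
  "rls_step c c' n s lmt h st =
     (case st of (X, bad) \<Rightarrow>
       do { T \<leftarrow> training_set n s;
            X' \<leftarrow> hvl_prime n X;
            let bad' = (bad \<or> bad_sol c c' n h T X \<or> bad_sol c c' n h T X');
            let Xnew = (if LeafCount X' \<le> lmt \<and> sampled_error h T X' \<le> sampled_error h T X
                        then X' else X);
            return_pmf (Xnew, bad') })"

definition rls_run :: "real \<Rightarrow> real \<Rightarrow> nat \<Rightarrow> nat \<Rightarrow> nat \<Rightarrow> (input \<Rightarrow> bool) \<Rightarrow> nat
    \<Rightarrow> (program \<times> bool) pmf" where
  "rls_run c c' n s lmt h t =
     ((\<lambda>p. bind_pmf p (rls_step c c' n s lmt h)) ^^ t) (return_pmf (None, False))"

end

theory Submission
  imports Defs "HOL-Real_Asymp.Real_Asymp"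
begin

text \<open>
  Fix a program \<open>X\<close> of generalisation error \<open>g\<close>. The \<open>s\<close> sampled inputs are misclassified
  independently, each with probability \<open>g\<close>, so an exponential-moment (Chernoff) bound with
  base 2 gives \<open>Pr[at most m errors] \<le> 2^m (1 - g/2)^s \<le> 2^m exp (-g s / 2)\<close>.
  For \<open>m = c' lg n\<close>, \<open>g > n^-c\<close> and \<open>s \<ge> n^c lg\<^sup>2 n\<close> this is at most
  \<open>n^c' exp (-lg\<^sup>2 n / 2)\<close>, which is superpolynomially small. In every iteration the two
  evaluated programs (parent and offspring) are independent of the fresh training set,
  so a union bound over the polynomially many iterations proves the theorem. Neither the
  size limit, nor the target, nor the signs of \<open>c\<close> and \<open>c'\<close> play a role.
\<close>

lemma sum_prod_list_lists_length:
  fixes f :: "'a \<Rightarrow> 'b::comm_semiring_1"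
  assumes "finite A"
  shows "(\<Sum>xs | set xs \<subseteq> A \<and> length xs = k. prod_list (map f xs)) = sum f A ^ k"
proof (induction k)
  case 0
  have "{xs. set xs \<subseteq> A \<and> length xs = 0} = {[]}" by auto
  then show ?case by simp
next
  case (Suc k)
  let ?S = "{xs. set xs \<subseteq> A \<and> length xs = k}"
  have inj: "inj_on (\<lambda>(xs, a). a # xs) (?S \<times> A)" by (auto simp: inj_on_def)
  have "(\<Sum>xs | set xs \<subseteq> A \<and> length xs = Suc k. prod_list (map f xs))
      = (\<Sum>(xs, a)\<in>?S \<times> A. f a * prod_list (map f xs))"
    unfolding lists_length_Suc_eq by (subst sum.reindex[OF inj]) (simp add: case_prod_unfold)
  also have "\<dots> = (\<Sum>xs\<in>?S. prod_list (map f xs)) * sum f A"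
    by (simp add: sum.cartesian_product[symmetric] sum_distrib_left sum_distrib_right mult.commute)
  finally show ?case using Suc by (simp add: mult.commute)
qed

lemma prod_list_map_if_one:
  "prod_list (map (\<lambda>x. if P x then a else 1) xs) = a ^ length (filter P xs)"
  by (induction xs) auto

text \<open>Markov's inequality for \<open>2 ^ -(number of hits)\<close>, whose mean factorises over the
  independent coordinates.\<close>
lemma prob_length_filter_le:
  fixes A :: "'a set" and m :: real
  assumes "finite A" and "A \<noteq> {}"
  shows "measure_pmf.prob (pmf_of_set {xs. set xs \<subseteq> A \<and> length xs = s})
           {xs. real (length (filter P xs)) \<le> m}
         \<le> 2 powr m * (1 - card {x\<in>A. P x} / card A / 2) ^ s"
proof -
  define S where "S = {xs. set xs \<subseteq> A \<and> length xs = s}"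
  define E where "E = {xs. real (length (filter P xs)) \<le> m}"
  define f where "f = (\<lambda>x. if P x then 1/2 else (1::real))"
  have finS: "finite S" unfolding S_def using assms(1) by (rule finite_lists_length_eq)
  have cardS: "card S = card A ^ s" unfolding S_def using assms(1) by (rule card_lists_length_eq)
  have "replicate s (SOME x. x \<in> A) \<in> S"
    using assms(2) by (auto simp: S_def some_in_eq)
  then have "S \<noteq> {}" by auto
  have markov: "1 \<le> 2 powr m * prod_list (map f xs)" if "xs \<in> E" for xs
  proof -
    have "2 powr m * prod_list (map f xs) = 2 powr (m - length (filter P xs))"
      by (simp add: f_def prod_list_map_if_one powr_diff powr_realpow power_one_over)
    then show ?thesis using that by (simp add: E_def ge_one_powr_ge_zero)
  qed
  have "real (card (S \<inter> E)) = (\<Sum>xs\<in>S \<inter> E. 1)" by simp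
  also have "\<dots> \<le> (\<Sum>xs\<in>S \<inter> E. 2 powr m * prod_list (map f xs))"
    using markov by (intro sum_mono) auto
  also have "\<dots> \<le> (\<Sum>xs\<in>S. 2 powr m * prod_list (map f xs))"
    by (rule sum_mono2) (auto simp: finS f_def prod_list_map_if_one)
  also have "\<dots> = 2 powr m * sum f A ^ s"
    by (simp add: S_def sum_distrib_left[symmetric] sum_prod_list_lists_length[OF assms(1)])
  also have "sum f A = (\<Sum>x\<in>A. 1 - (if P x then 1/2 else 0))"
    unfolding f_def by (rule sum.cong) auto
  also have "\<dots> = card A - card {x\<in>A. P x} / 2"
    using assms(1) by (simp add: sum_subtractf sum.inter_filter[symmetric])
  finally have "card (S \<inter> E) / card S \<le> 2 powr m * ((card A - card {x\<in>A. P x} / 2) / card A) ^ s"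
    by (simp add: cardS divide_right_mono power_divide)
  also have "(card A - card {x\<in>A. P x} / 2) / card A = 1 - card {x\<in>A. P x} / card A / 2"
    using assms by (simp add: field_simps)
  finally show ?thesis
    using finS \<open>S \<noteq> {}\<close> by (simp add: measure_pmf_of_set S_def E_def)
qed

lemma prob_bind_pmf_le:
  assumes "\<And>x. x \<in> set_pmf M \<Longrightarrow> measure_pmf.prob (N x) A \<le> indicator B x + e"
    and "e \<ge> 0"
  shows "measure_pmf.prob (bind_pmf M N) A \<le> measure_pmf.prob M B + e"
proof -
  have "emeasure (bind_pmf M N) A = (\<integral>\<^sup>+x. emeasure (N x) A \<partial>M)"
    by simp
  also have "\<dots> \<le> (\<integral>\<^sup>+x. ennreal (indicator B x) + ennreal e \<partial>M)"
    using assms by (intro nn_integral_mono_AE)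
      (auto simp: AE_measure_pmf_iff measure_pmf.emeasure_eq_measure simp flip: ennreal_plus)
  also have "\<dots> = emeasure M B + ennreal e"
    by (simp add: nn_integral_add measure_pmf.emeasure_space_1 ennreal_indicator)
  finally show ?thesis
    using assms(2) by (simp add: measure_pmf.emeasure_eq_measure flip: ennreal_plus)
qed

lemma prob_pair_pmf_le:
  assumes "\<And>y. y \<in> set_pmf N \<Longrightarrow> measure_pmf.prob M {x. Q x y} \<le> e" and "e \<ge> 0"
  shows "measure_pmf.prob (pair_pmf M N) {p. Q (fst p) (snd p)} \<le> e"
proof -
  have "pair_pmf M N = bind_pmf N (\<lambda>y. map_pmf (\<lambda>x. (x, y)) M)"
    unfolding pair_pmf_def map_pmf_def by (subst bind_commute_pmf) simp
  moreover have "measure_pmf.prob (bind_pmf N (\<lambda>y. map_pmf (\<lambda>x. (x, y)) M))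
      {p. Q (fst p) (snd p)} \<le> measure_pmf.prob N {} + e"
    using assms by (intro prob_bind_pmf_le) (auto simp: vimage_def)
  ultimately show ?thesis by simp
qed

lemma prob_funpow_bind_pmf_le:
  assumes "\<And>x. measure_pmf.prob (K x) A \<le> indicator A x + e" and "e \<ge> 0"
  shows "measure_pmf.prob (((\<lambda>p. bind_pmf p K) ^^ t) p) A \<le> measure_pmf.prob p A + t * e"
proof (induction t)
  case 0
  then show ?case by simp
next
  case (Suc t)
  have "measure_pmf.prob (((\<lambda>p. bind_pmf p K) ^^ Suc t) p) A
      \<le> measure_pmf.prob (((\<lambda>p. bind_pmf p K) ^^ t) p) A + e"
    using assms by (simp add: prob_bind_pmf_le)
  with Suc show ?case by (simp add: algebra_simps)
qed

lemma finite_inputs: "finite (inputs n)"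
  using finite_lists_length_eq[of "UNIV :: bool set" n] by (simp add: inputs_def)

lemma card_inputs: "card (inputs n) = 2 ^ n"
  using card_lists_length_eq[of "UNIV :: bool set" n] by (simp add: inputs_def)

lemma gen_error_le_1: "gen_error n h X \<le> 1"
proof -
  have "card {x \<in> inputs n. eval_prog X x \<noteq> Some (h x)} \<le> card (inputs n)"
    by (rule card_mono[OF finite_inputs]) auto
  then show ?thesis by (simp add: gen_error_def card_inputs)
qed

lemma prob_sampled_error_le:
  "measure_pmf.prob (training_set n s) {T. real (sampled_error h T X) \<le> m}
     \<le> 2 powr m * (1 - gen_error n h X / 2) ^ s"
proof -
  have "training_set n s = pmf_of_set {T. set T \<subseteq> inputs n \<and> length T = s}"
    by (auto simp: training_set_def intro: arg_cong[where f = pmf_of_set])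
  moreover have "inputs n \<noteq> {}"
    using card_inputs[of n] by auto
  ultimately show ?thesis
    using prob_length_filter_le[OF finite_inputs, of n]
    by (simp add: sampled_error_def gen_error_def card_inputs)
qed

lemma prob_bad_sol_le:
  assumes n: "n > 0" and s: "real s \<ge> real n powr c * (log 2 (real n))\<^sup>2"
  shows "measure_pmf.prob (training_set n s) {T. bad_sol c c' n h T X}
           \<le> real n powr c' * exp (- (log 2 (real n))\<^sup>2 / 2)"
proof (cases "gen_error n h X > real n powr (- c)")
  case False
  then show ?thesis by (simp add: bad_sol_def)
next
  case True
  define g where "g = gen_error n h X"
  define L where "L = log 2 (real n)"
  have "measure_pmf.prob (training_set n s) {T. bad_sol c c' n h T X}
        \<le> measure_pmf.prob (training_set n s) {T. real (sampled_error h T X) \<le> c' * L}"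
    by (rule measure_pmf.finite_measure_mono) (auto simp: bad_sol_def L_def)
  also have "\<dots> \<le> 2 powr (c' * L) * (1 - g / 2) ^ s"
    unfolding g_def by (rule prob_sampled_error_le)
  also have "2 powr (c' * L) = (2 powr L) powr c'"
    by (simp add: powr_powr mult.commute)
  also have "2 powr L = real n"
    using n by (simp add: L_def)
  also have "(1 - g / 2) ^ s \<le> exp (- g / 2) ^ s"
    using gen_error_le_1[of n h X] exp_ge_add_one_self[of "- g / 2"]
    by (intro power_mono) (auto simp: g_def)
  also have "\<dots> = exp (- (g * s) / 2)"
    by (simp add: exp_of_nat_mult[symmetric] mult.commute)
  also have "\<dots> \<le> exp (- L\<^sup>2 / 2)"
  proof -
    have "L\<^sup>2 = real n powr (- c) * (real n powr c * L\<^sup>2)"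
      using n by (simp add: powr_minus)
    also have "\<dots> \<le> g * s"
      using True s by (intro mult_mono) (auto simp: g_def L_def gen_error_def)
    finally show ?thesis by simp
  qed
  finally show ?thesis by (simp add: L_def mult_left_mono)
qed

lemma rls_step_unflagged:
  "rls_step c c' n s lmt h (X, False) =
     map_pmf (\<lambda>(T, X'). (if LeafCount X' \<le> lmt \<and> sampled_error h T X' \<le> sampled_error h T X
                         then X' else X, bad_sol c c' n h T X \<or> bad_sol c c' n h T X'))
       (pair_pmf (training_set n s) (hvl_prime n X))"
  unfolding rls_step_def pair_pmf_def by (simp add: map_bind_pmf Let_def)

text \<open>The offspring is drawn independently of the training set, so both evaluated
  programs are fixed when the training set is sampled.\<close>
lemma prob_rls_step_flag_le:
  assumes bad: "\<And>X. measure_pmf.prob (training_set n s) {T. bad_sol c c' n h T X} \<le> e"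
  shows "measure_pmf.prob (rls_step c c' n s lmt h st) {st. snd st}
           \<le> indicator {st. snd st} st + 2 * e"
proof -
  have "e \<ge> 0"
    using bad[of None] measure_nonneg order_trans by blast
  obtain X flag where st: "st = (X, flag)" by (cases st)
  show ?thesis
  proof (cases flag)
    case True
    then show ?thesis
      using st \<open>e \<ge> 0\<close> by (intro order_trans[OF measure_pmf.prob_le_1]) simp
  next
    case False
    let ?P = "pair_pmf (training_set n s) (hvl_prime n X)"
    have "measure_pmf.prob (rls_step c c' n s lmt h st) {st. snd st}
        = measure_pmf.prob ?P
            ({p. bad_sol c c' n h (fst p) X} \<union> {p. bad_sol c c' n h (fst p) (snd p)})"
      by (simp add: st False rls_step_unflagged vimage_def case_prod_unfold Un_def)
    also have "\<dots> \<le> measure_pmf.prob ?P {p. bad_sol c c' n h (fst p) X}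
                    + measure_pmf.prob ?P {p. bad_sol c c' n h (fst p) (snd p)}"
      by (rule measure_Un_le) auto
    also have "\<dots> \<le> e + e"
      using bad \<open>e \<ge> 0\<close> by (intro add_mono prob_pair_pmf_le)
    finally show ?thesis by (simp add: st False)
  qed
qed

theorem lemma11:
  fixes c c' :: real and lmt s :: "nat \<Rightarrow> nat" and hf :: "nat \<Rightarrow> func" and k :: nat
  assumes "c > 0" and "c' > 0"
    and "\<And>n. lmt n \<ge> n"
    and "\<And>n. real (s n) \<ge> real n powr c * (log 2 (real n))\<^sup>2"
  shows "(\<lambda>n. measure_pmf.prob
                (rls_run c c' n (s n) (lmt n) (target (hf n) n) (n ^ k)) {st. snd st})
           \<longlonglongrightarrow> 0"
proof (rule tendsto_sandwich[where f = "\<lambda>_. 0"])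
  define e where "e n = real n powr c' * exp (- (log 2 (real n))\<^sup>2 / 2)" for n
  show "\<forall>\<^sub>F n in sequentially. measure_pmf.prob
          (rls_run c c' n (s n) (lmt n) (target (hf n) n) (n ^ k)) {st. snd st}
        \<le> real (n ^ k) * (2 * e n)"
    using eventually_gt_at_top[of "0::nat"]
  proof eventually_elim
    case (elim n)
    have "measure_pmf.prob (rls_step c c' n (s n) (lmt n) (target (hf n) n) st) {st. snd st}
            \<le> indicator {st. snd st} st + 2 * e n" for st
      unfolding e_def by (intro prob_rls_step_flag_le prob_bad_sol_le elim assms(4))
    then have "measure_pmf.prob (rls_run c c' n (s n) (lmt n) (target (hf n) n) (n ^ k))
          {st. snd st}
        \<le> measure_pmf.prob (return_pmf (None :: program, False)) {st. snd st} + n ^ k * (2 * e n)"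
      unfolding rls_run_def by (rule prob_funpow_bind_pmf_le) (simp add: e_def)
    then show ?case by simp
  qed
  show "(\<lambda>n. real (n ^ k) * (2 * e n)) \<longlonglongrightarrow> 0"
    unfolding e_def by real_asymp
qed simp_all

end
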